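(* Let $\mathfrak a$ be a skew-symmetric invariant $n$-ary algebra which is irreducible but not simple, and let $\mathfrak i$ be a maximal non-trivial ideal of $\mathfrak a$ of codimension $1$. Then $\mathfrak a$ is isomorphic to a certain double extension (generalized double extension of some $\mathfrak g$ by some one-dimensional $\mathfrak h$ via $\psi_1,\dots,\psi_{n+1}$) with $\nu=0$ and $\psi_i=0$ for all $i\neq1$.
   Context: A skew-symmetric invariant $n$-ary algebra is a commutative invariant $n$-ary superalgebra whose underlying superspace is purely odd; concretely, a finite-dimensional vector space over $\mathbb K=\mathbb R$ or $\mathbb C$ with a non-degenerate symmetric bilinear form $(\,,)$ and a skew-symmetric $n$-linear map $\{\,\}$ satisfying $(a_0,\{a_1,\dots,a_n\})=-(a_1,\{a_0,a_2,\dots,a_n\})$. (In general: a commutative $n$-ary superalgebra satisfies $\{\dots,a_i,a_{i+1},\dots\}=(-1)^{\bar a_i\bar a_{i+1}}\{\dots,a_{i+1},a_i,\dots\}$, and invariance with respect to an even super-skew-symmetric form, $(a,b)=-(-1)^{\bar a\bar b}(b,a)$, means $(a_0,\{a_1,\dots,a_n\})=(-1)^{\bar a_0\bar a_1}(a_1,\{a_0,a_2,\dots,a_n\})$.) Ideal: subspace $\mathfrak i$ with $\{\mathfrak a,\dots,\mathfrak a,\mathfrak i\}\subset\mathfrak i$. Simple: not trivial one-dimensional and no proper ideals. Irreducible: not a direct sum of two ideals on which the form is non-degenerate. Derived potential: $S^*V$ (super-symmetric algebra of a superspace $V$ with such a form) carries the Poisson bracket with $[x,y]=(x,y)$ on $V$,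 $[v,w_1w_2]=[v,w_1]w_2+(-1)^{\bar v\bar w_1}w_1[v,w_2]$, $[v,w]=-(-1)^{\bar v\bar w}[w,v]$; every commutative invariant $n$-ary superalgebra on $V$ is $\{a_1,\dots,a_n\}=[a_1,[\dots,[a_n,\mu]\dots]]$ for some $\mu\in S^{n+1}V$ (its derived potential). Generalized double extension: given a commutative invariant $n$-ary superalgebra $\mathfrak g$ with derived potential $\mu\in S^{n+1}\mathfrak g$ and a commutative $n$-ary superalgebra $\mathfrak h$ with multiplication $\nu\in S^n\mathfrak h^*\otimes\mathfrak h\cong S^n\mathfrak h^*\cdot\mathfrak h\subset S^*(\mathfrak h\oplus\mathfrak h^* )$, where $\mathfrak h\oplus\mathfrak h^*$ has the form with $\mathfrak h,\mathfrak h^*$ isotropic, $(\alpha,x)=\alpha(x)$, $(x,\alpha)=-(-1)^{\bar\alpha\bar x}\alpha(x)$, the commutative invariant $n$-ary superalgebra on $\mathfrak d=\mathfrak g\oplus\mathfrak h\oplus\mathfrak h^*$ (orthogonal sum of forms) with derived potential $\mu+\nu+\sum_{i=1}^{n+1}\psi_i$, $\psi_i\in S^i\mathfrak h^*\cdot S^{n-i+1}\mathfrak g$, is the generalized double extension of $\mathfrak g$ by $\mathfrak h$ via the $\psi_i$; it is called a double extension if $\psi_n=\psi_{n+1}=0$. *)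

theory Defs
  imports Complex_Main "HOL-Library.Product_Plus"
begin

definition fin_dim :: "('k::field \<Rightarrow> 'v::ab_group_add \<Rightarrow> 'v) \<Rightarrow> 'v set \<Rightarrow> bool" where
  "fin_dim scale V \<longleftrightarrow> (\<exists>S. S \<subseteq> V \<and> finite S \<and> module.span scale S = V)"

definition nondeg_on :: "('v::zero \<Rightarrow> 'v \<Rightarrow> 'k::zero) \<Rightarrow> 'v set \<Rightarrow> bool" where
  "nondeg_on B V \<longleftrightarrow> (\<forall>x\<in>V. (\<forall>y\<in>V. B x y = 0) \<longrightarrow> x = 0)"

definition ssia :: "('k::field \<Rightarrow> 'v::ab_group_add \<Rightarrow> 'v) \<Rightarrow> 'v set \<Rightarrow> ('v \<Rightarrow> 'v \<Rightarrow> 'k)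
    \<Rightarrow> ('v list \<Rightarrow> 'v) \<Rightarrow> nat \<Rightarrow> bool" where
  "ssia scale V B P n \<longleftrightarrow>
     module.subspace scale V \<and> fin_dim scale V \<and>
     \<comment> \<open>symmetric bilinear non-degenerate form\<close>
     (\<forall>x\<in>V. \<forall>y\<in>V. \<forall>z\<in>V. \<forall>c. B (x + y) z = B x z + B y z \<and> B (scale c x) z = c * B x z) \<and>
     (\<forall>x\<in>V. \<forall>y\<in>V. B x y = B y x) \<and>
     nondeg_on B V \<and>
     \<comment> \<open>n-linear product with values in V\<close>
     (\<forall>as. set as \<subseteq> V \<and> length as = n \<longrightarrow> P as \<in> V) \<and>
     (\<forall>as i x y c. set as \<subseteq> V \<and> length as = n \<and> i < n \<and> x \<in> V \<and> y \<in> V \<longrightarrow>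
        P (as[i := x + y]) = P (as[i := x]) + P (as[i := y]) \<and>
        P (as[i := scale c x]) = scale c (P (as[i := x]))) \<and>
     \<comment> \<open>skew-symmetry\<close>
     (\<forall>as i. set as \<subseteq> V \<and> length as = n \<and> Suc i < n \<longrightarrow>
        P (as[i := as ! Suc i, Suc i := as ! i]) = - P as) \<and>
     \<comment> \<open>invariance\<close>
     (\<forall>a0 a1 as. a0 \<in> V \<and> a1 \<in> V \<and> set as \<subseteq> V \<and> length as = n - 1 \<longrightarrow>
        B a0 (P (a1 # as)) = - B a1 (P (a0 # as)))"

definition ideal :: "('k::field \<Rightarrow> 'v::ab_group_add \<Rightarrow> 'v) \<Rightarrow> 'v set \<Rightarrow> ('v list \<Rightarrow> 'v)
    \<Rightarrow> nat \<Rightarrow> 'v set \<Rightarrow> bool" where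
  "ideal scale V P n I \<longleftrightarrow> module.subspace scale I \<and> I \<subseteq> V \<and>
     (\<forall>as x. set as \<subseteq> V \<and> length as = n - 1 \<and> x \<in> I \<longrightarrow> P (as @ [x]) \<in> I)"

definition simple :: "('k::field \<Rightarrow> 'v::ab_group_add \<Rightarrow> 'v) \<Rightarrow> 'v set \<Rightarrow> ('v list \<Rightarrow> 'v)
    \<Rightarrow> nat \<Rightarrow> bool" where
  "simple scale V P n \<longleftrightarrow>
     \<not> (vector_space.dim scale V = 1 \<and> (\<forall>as. set as \<subseteq> V \<and> length as = n \<longrightarrow> P as = 0)) \<and>
     (\<forall>I. ideal scale V P n I \<longrightarrow> I = {0} \<or> I = V)"

definition irreducible :: "('k::field \<Rightarrow> 'v::ab_group_add \<Rightarrow> 'v) \<Rightarrow> 'v set \<Rightarrow> ('v \<Rightarrow> 'v \<Rightarrow> 'k)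
    \<Rightarrow> ('v list \<Rightarrow> 'v) \<Rightarrow> nat \<Rightarrow> bool" where
  "irreducible scale V B P n \<longleftrightarrow>
     \<not> (\<exists>I J. ideal scale V P n I \<and> ideal scale V P n J \<and> I \<noteq> {0} \<and> J \<noteq> {0} \<and>
             I \<inter> J = {0} \<and> {x + y | x y. x \<in> I \<and> y \<in> J} = V \<and>
             nondeg_on B I \<and> nondeg_on B J)"

definition maximal_nontrivial_ideal :: "('k::field \<Rightarrow> 'v::ab_group_add \<Rightarrow> 'v) \<Rightarrow> 'v set
    \<Rightarrow> ('v list \<Rightarrow> 'v) \<Rightarrow> nat \<Rightarrow> 'v set \<Rightarrow> bool" where
  "maximal_nontrivial_ideal scale V P n I \<longleftrightarrow>
     ideal scale V P n I \<and> I \<noteq> {0} \<and> I \<noteq> V \<and>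
     (\<forall>J. ideal scale V P n J \<and> I \<subseteq> J \<longrightarrow> J = I \<or> J = V)"

text \<open>Skew-symmetric n-linear forms on G (these correspond to elements phi of S^n g,
  g purely odd, via the non-degenerate form).\<close>

definition skew_form :: "('k::field \<Rightarrow> 'v::ab_group_add \<Rightarrow> 'v) \<Rightarrow> 'v set \<Rightarrow> nat
    \<Rightarrow> ('v list \<Rightarrow> 'k) \<Rightarrow> bool" where
  "skew_form scale G n \<Phi> \<longleftrightarrow>
     (\<forall>as i x y c. set as \<subseteq> G \<and> length as = n \<and> i < n \<and> x \<in> G \<and> y \<in> G \<longrightarrow>
        \<Phi> (as[i := x + y]) = \<Phi> (as[i := x]) + \<Phi> (as[i := y]) \<and>
        \<Phi> (as[i := scale c x]) = c * \<Phi> (as[i := x])) \<and>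
     (\<forall>as i. set as \<subseteq> G \<and> length as = n \<and> Suc i < n \<longrightarrow>
        \<Phi> (as[i := as ! Suc i, Suc i := as ! i]) = - \<Phi> as)"

text \<open>The double extension d = g + h + h^* with h = K x one-dimensional (odd), h^* = K alpha,
  (x, alpha) = 1; an element (u, s, t) stands for u + s x + t alpha.\<close>

definition dscale :: "('k::field \<Rightarrow> 'v \<Rightarrow> 'v) \<Rightarrow> 'k \<Rightarrow> 'v \<times> 'k \<times> 'k \<Rightarrow> 'v \<times> 'k \<times> 'k" where
  "dscale scale c a = (scale c (fst a), c * fst (snd a), c * snd (snd a))"

definition dform :: "('v \<Rightarrow> 'v \<Rightarrow> 'k::field) \<Rightarrow> 'v \<times> 'k \<times> 'k \<Rightarrow> 'v \<times> 'k \<times> 'k \<Rightarrow> 'k" where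
  "dform Bg a b = Bg (fst a) (fst b) + fst (snd a) * snd (snd b) + snd (snd a) * fst (snd b)"

definition del_nth :: "nat \<Rightarrow> 'a list \<Rightarrow> 'a list" where
  "del_nth i xs = take i xs @ drop (Suc i) xs"

text \<open>The (n+1)-form (a0, {a1,...,an}) associated with the derived potential mu + alpha phi,
  mu the derived potential of g: the g-part plus the contraction of alpha phi, where
  (a_i, alpha) is the x-coordinate of a_i.\<close>

definition dext_omega :: "('v \<Rightarrow> 'v \<Rightarrow> 'k::field) \<Rightarrow> ('v list \<Rightarrow> 'v) \<Rightarrow> ('v list \<Rightarrow> 'k)
    \<Rightarrow> nat \<Rightarrow> ('v \<times> 'k \<times> 'k) list \<Rightarrow> 'k" where
  "dext_omega Bg Pg \<Phi> n as =
     Bg (fst (hd as)) (Pg (map fst (tl as))) +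
     (\<Sum>i<Suc n. (-1) ^ i * fst (snd (as ! i)) * \<Phi> (map fst (del_nth i as)))"

definition iso_to_double_ext_psi1 :: "('k::field \<Rightarrow> 'v::ab_group_add \<Rightarrow> 'v) \<Rightarrow> ('v \<Rightarrow> 'v \<Rightarrow> 'k)
    \<Rightarrow> ('v list \<Rightarrow> 'v) \<Rightarrow> nat \<Rightarrow> bool" where
  "iso_to_double_ext_psi1 scale B P n \<longleftrightarrow>
     (\<exists>G Bg Pg \<Phi> Pd f.
        ssia scale G Bg Pg n \<and> skew_form scale G n \<Phi> \<and>
        (\<forall>as. set as \<subseteq> G \<times> UNIV \<and> length as = n \<longrightarrow> Pd as \<in> G \<times> UNIV) \<and>
        (\<forall>a0 as. a0 \<in> G \<times> UNIV \<and> set as \<subseteq> G \<times> UNIV \<and> length as = n \<longrightarrow>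
           dform Bg a0 (Pd as) = dext_omega Bg Pg \<Phi> n (a0 # as)) \<and>
        bij_betw f UNIV (G \<times> UNIV) \<and>
        (\<forall>x y. f (x + y) = f x + f y) \<and>
        (\<forall>c x. f (scale c x) = dscale scale c (f x)) \<and>
        (\<forall>x y. dform Bg (f x) (f y) = B x y) \<and>
        (\<forall>as. length as = n \<longrightarrow> f (P as) = Pd (map f as)))"

end

theory Submission
  imports Defs
begin

text \<open>Let \<open>e \<noteq> 0\<close> be orthogonal to the codimension-one ideal \<open>I\<close>. If \<open>e \<notin> I\<close>, then \<open>I\<close>
  and its orthogonal complement would be complementary non-degenerate ideals, contradicting
  irreducibility; so \<open>e \<in> I\<close>, \<open>e\<close> is isotropic and \<open>I\<close> is the orthogonal of \<open>e\<close>. Pick an isotropic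
  \<open>x\<close> with \<open>(x, e) = 1\<close>. Since \<open>{I, \<dots>} \<subseteq> I\<close> and \<open>x\<close> cannot occur twice in a bracket, \<open>e\<close> is
  orthogonal to every bracket. Decompose \<open>a = u + s x + t e\<close> with \<open>u\<close> orthogonal to \<open>x\<close> and \<open>e\<close>,
  and expand the (n+1)-form \<open>(a\<^sub>0, {a\<^sub>1, \<dots>, a\<^sub>n})\<close> multilinearly: the \<open>e\<close>-components drop out
  and each \<open>x\<close>-component contributes one term of \<open>\<alpha> \<phi>\<close> with \<open>\<phi> = (x, {\<dots>})\<close>. This is the
  double extension with \<open>\<nu> = 0\<close> and \<open>\<psi>\<^sub>1 = \<alpha> \<phi>\<close> the only non-zero \<open>\<psi>\<^sub>i\<close>.\<close>

definition multilinear_list :: "('k::field \<Rightarrow> 'v::ab_group_add \<Rightarrow> 'v) \<Rightarrow> nat \<Rightarrow> ('v list \<Rightarrow> 'k) \<Rightarrow> bool" where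
  "multilinear_list scale m F \<longleftrightarrow> (\<forall>cs i a b c. length cs = m \<longrightarrow> i < m \<longrightarrow>
     F (cs[i := a + b]) = F (cs[i := a]) + F (cs[i := b]) \<and>
     F (cs[i := scale c a]) = c * F (cs[i := a]))"

lemma multilinear_list_Cons:
  fixes scale :: "'k::field \<Rightarrow> 'v::ab_group_add \<Rightarrow> 'v"
  shows "multilinear_list scale (Suc m) F \<Longrightarrow> multilinear_list scale m (\<lambda>cs. F (c # cs))"
  unfolding multilinear_list_def
proof (intro allI impI)
  fix cs :: "'v list" and i a b d
  assume F: "\<forall>cs i a b c. length cs = Suc m \<longrightarrow> i < Suc m \<longrightarrow>
      F (cs[i := a + b]) = F (cs[i := a]) + F (cs[i := b]) \<and>
      F (cs[i := scale c a]) = c * F (cs[i := a])"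
    and "length cs = m" "i < m"
  with F[rule_format, of "c # cs" "Suc i" a b d]
  show "F (c # cs[i := a + b]) = F (c # cs[i := a]) + F (c # cs[i := b]) \<and>
        F (c # cs[i := scale d a]) = d * F (c # cs[i := a])" by simp
qed

lemma multilinear_list_hd:
  assumes "multilinear_list scale (Suc m) F" "length r = m"
  shows "F ((a + b) # r) = F (a # r) + F (b # r)" "F (scale d a # r) = d * F (a # r)"
  using assms(1)[unfolded multilinear_list_def, rule_format, of "a # r" 0 a b d] assms(2)
  by simp_all

lemma multilinear_list_add_null:
  "multilinear_list scale (length us) F \<Longrightarrow>
   (\<forall>cs i. length cs = length us \<longrightarrow> i < length us \<longrightarrow> F (cs[i := e]) = 0) \<Longrightarrow>
   F (map (\<lambda>(c, t). c + scale t e) us) = F (map fst us)"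
proof (induction us arbitrary: F)
  case Nil
  then show ?case by simp
next
  case (Cons ct us)
  obtain c t where ct: "ct = (c, t)" by force
  let ?r = "map (\<lambda>(c, t). c + scale t e) us"
  have "F ((c + scale t e) # ?r) = F (c # ?r) + t * F (e # ?r)"
    using multilinear_list_hd[OF Cons.prems(1)[simplified]] by simp
  also have "F (e # ?r) = 0" using Cons.prems(2)[rule_format, of "c # ?r" 0] by simp
  also have "F (c # ?r) = F (c # map fst us)"
  proof (rule Cons.IH)
    show "multilinear_list scale (length us) (\<lambda>cs. F (c # cs))"
      using multilinear_list_Cons Cons.prems(1) by simp
    show "\<forall>cs i. length cs = length us \<longrightarrow> i < length us \<longrightarrow> F (c # cs[i := e]) = 0"
      using Cons.prems(2)[rule_format, of "c # _" "Suc _"] by simp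
  qed
  finally show ?case using ct by simp
qed

lemma multilinear_list_add_alternating:
  "multilinear_list scale (length us) F \<Longrightarrow>
   (\<forall>cs i j. length cs = length us \<longrightarrow> i < length us \<longrightarrow> j < length us \<longrightarrow> i \<noteq> j \<longrightarrow>
      F (cs[i := x, j := x]) = 0) \<Longrightarrow>
   F (map (\<lambda>(u, s). u + scale s x) us) =
     F (map fst us) + (\<Sum>i<length us. snd (us ! i) * F ((map fst us)[i := x]))"
proof (induction us arbitrary: F)
  case Nil
  then show ?case by simp
next
  case (Cons us0 us)
  obtain u s where us0: "us0 = (u, s)" by force
  let ?r = "map (\<lambda>(u, s). u + scale s x) us"
  let ?ul = "map fst us"
  have F: "multilinear_list scale (Suc (length us)) F" using Cons.prems(1) by simp
  have twice: "\<forall>cs i j. length cs = length us \<longrightarrow> i < length us \<longrightarrow> j < length us \<longrightarrow> i \<noteq> j \<longrightarrow>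
      F (c # cs[i := x, j := x]) = 0" for c
    using Cons.prems(2)[rule_format, of "c # _" "Suc _" "Suc _"] by simp
  have "F ((u + scale s x) # ?r) = F (u # ?r) + s * F (x # ?r)"
    using multilinear_list_hd[OF F] by simp
  also have "F (u # ?r) = F (u # ?ul) + (\<Sum>i<length us. snd (us ! i) * F (u # ?ul[i := x]))"
    using Cons.IH[of "\<lambda>cs. F (u # cs)"] multilinear_list_Cons[OF F] twice by simp
  also have "F (x # ?r) = F (x # ?ul)"
  proof -
    have "\<forall>i<length us. F (x # ?ul[i := x]) = 0"
      using Cons.prems(2)[rule_format, of "x # ?ul" 0 "Suc _"] by simp
    then show ?thesis
      using Cons.IH[of "\<lambda>cs. F (x # cs)"] multilinear_list_Cons[OF F] twice by simp
  qed
  finally have "F (map (\<lambda>(u, s). u + scale s x) (us0 # us)) =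
      F (u # ?ul) + s * F (x # ?ul) + (\<Sum>i<length us. snd (us ! i) * F (u # ?ul[i := x]))"
    using us0 by (simp add: algebra_simps)
  moreover have "(\<Sum>i<length (us0 # us). snd ((us0 # us) ! i) * F ((map fst (us0 # us))[i := x]))
     = s * F (x # ?ul) + (\<Sum>i<length us. snd (us ! i) * F (u # ?ul[i := x]))"
    unfolding length_Cons sum.lessThan_Suc_shift using us0 by simp
  ultimately show ?case using us0 by (simp add: algebra_simps)
qed

lemma del_nth_Cons_0 [simp]: "del_nth 0 (y # r) = r"
  by (simp add: del_nth_def)

lemma del_nth_Cons_Suc [simp]: "del_nth (Suc k) (y # r) = y # del_nth k r"
  by (simp add: del_nth_def)

lemma length_del_nth [simp]: "k < length r \<Longrightarrow> length (del_nth k r) = length r - 1"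
  by (simp add: del_nth_def)

lemma map_del_nth: "map f (del_nth i xs) = del_nth i (map f xs)"
  by (simp add: del_nth_def take_map drop_map)

locale ssia_algebra = vector_space scale
  for scale :: "'k::field_char_0 \<Rightarrow> 'v::ab_group_add \<Rightarrow> 'v" +
  fixes B :: "'v \<Rightarrow> 'v \<Rightarrow> 'k" and P :: "'v list \<Rightarrow> 'v" and n :: nat
  assumes ssia: "ssia scale UNIV B P n"
    and arity: "2 \<le> n"
begin

lemma fin_dim_UNIV: "fin_dim scale UNIV"
  using ssia unfolding ssia_def by (elim conjE)

lemma form_add_left: "B (x + y) z = B x z + B y z"
  and form_scale_left: "B (scale c x) z = c * B x z"
  and form_commute: "B x y = B y x"
  and form_nondegenerate: "(\<And>y. B x y = 0) \<Longrightarrow> x = 0"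
  using ssia unfolding ssia_def nondeg_on_def by auto

lemma form_add_right: "B z (x + y) = B z x + B z y"
  and form_scale_right: "B z (scale c x) = c * B z x"
  using form_add_left form_scale_left form_commute by metis+

lemma form_diff_left: "B (x - y) z = B x z - B y z"
  using form_add_left[of "x - y" y z] by simp

lemma form_diff_right: "B z (x - y) = B z x - B z y"
  using form_diff_left form_commute by metis

lemma form_zero_left [simp]: "B 0 z = 0"
  using form_diff_left[of 0 0 z] by simp

lemma form_zero_right [simp]: "B z 0 = 0"
  using form_diff_right[of z 0 0] by simp

lemma form_minus_right: "B z (- x) = - B z x"
  using form_diff_right[of z 0 x] by simp

lemma bracket_add: "length as = n \<Longrightarrow> i < n \<Longrightarrow> P (as[i := x + y]) = P (as[i := x]) + P (as[i := y])"
  and bracket_scale: "length as = n \<Longrightarrow> i < n \<Longrightarrow> P (as[i := scale c x]) = scale c (P (as[i := x]))"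
  and bracket_swap_nth: "length as = n \<Longrightarrow> Suc i < n \<Longrightarrow> P (as[i := as ! Suc i, Suc i := as ! i]) = - P as"
  and bracket_invariant: "length as = n - 1 \<Longrightarrow> B a0 (P (a1 # as)) = - B a1 (P (a0 # as))"
  using ssia unfolding ssia_def by blast+

lemma form_bracket_self: "length r = n - 1 \<Longrightarrow> B x (P (x # r)) = 0"
  using bracket_invariant[of r x x] by simp

lemma self_neg_eq_zero: "(v :: 'v) = - v \<Longrightarrow> v = 0"
proof -
  assume "v = - v"
  then have "v + v = 0" by (simp only: eq_neg_iff_add_eq_0)
  then have "scale (1 + 1) v = 0" using scale_left_distrib[of 1 1 v] by simp
  then have "scale (1 / (1 + 1)) (scale (1 + 1) v) = 0" by simp
  then show "v = 0" by simp
qed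

lemma bracket_swap: "length (t @ a # b # d) = n \<Longrightarrow> P (t @ b # a # d) = - P (t @ a # b # d)"
  using bracket_swap_nth[of "t @ a # b # d" "length t"] by (simp add: list_update_append nth_append)

lemma bracket_move_to_front:
  "length (t @ y # d) = n \<Longrightarrow> P (t @ y # d) = scale ((-1) ^ length t) (P (y # t @ d))"
proof (induction t arbitrary: d rule: rev_induct)
  case Nil
  then show ?case by simp
next
  case (snoc a t)
  have "P (t @ a # y # d) = - P (t @ y # a # d)"
    using bracket_swap[of t y a d] snoc.prems by simp
  also have "P (t @ y # a # d) = scale ((-1) ^ length t) (P (y # t @ a # d))"
    using snoc.IH[of "a # d"] snoc.prems by simp
  finally show ?case by simp
qed

lemma bracket_update:
  assumes "length r = n" "j < n"
  shows "P (r[j := y]) = scale ((-1) ^ j) (P (y # del_nth j r))"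
  using bracket_move_to_front[of "take j r" y "drop (Suc j) r"] assms
  by (simp add: upd_conv_take_nth_drop del_nth_def)

lemma bracket_repeat_hd: "length r = n - 2 \<Longrightarrow> P (y # y # r) = 0"
  using bracket_swap[of "[]" y y r] arity by (intro self_neg_eq_zero) simp

lemma bracket_repeat:
  assumes l: "length r = n - 1" and k: "k < n - 1" and y: "r ! k = y"
  shows "P (y # r) = 0"
proof -
  have "P (y # r) = P ((y # r)[Suc k := y])" using list_update_id[of r k] y by simp
  also have "\<dots> = scale ((-1) ^ Suc k) (P (y # del_nth (Suc k) (y # r)))"
    by (rule bracket_update) (use l k arity in simp_all)
  also have "P (y # del_nth (Suc k) (y # r)) = 0"
    using bracket_repeat_hd[of "del_nth k r" y] l k by simp
  finally show ?thesis by simp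
qed

definition potential :: "'v list \<Rightarrow> 'k" where
  "potential cs = B (hd cs) (P (tl cs))"

lemma potential_Cons [simp]: "potential (c # r) = B c (P r)"
  by (simp add: potential_def)

lemma multilinear_potential: "multilinear_list scale (Suc n) potential"
  unfolding multilinear_list_def
proof (intro allI impI)
  fix cs :: "'v list" and i a b c
  assume l: "length cs = Suc n" and i: "i < Suc n"
  obtain c0 r where cs: "cs = c0 # r" and r: "length r = n" using l by (cases cs) auto
  show "potential (cs[i := a + b]) = potential (cs[i := a]) + potential (cs[i := b]) \<and>
        potential (cs[i := scale c a]) = c * potential (cs[i := a])"
  proof (cases i)
    case 0
    then show ?thesis using cs by (simp add: form_add_left form_scale_left)
  next
    case (Suc j)
    with i have "j < n" by simp
    then show ?thesis using cs Suc bracket_add[OF r] bracket_scale[OF r]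
      by (simp add: form_add_right form_scale_right)
  qed
qed

lemma potential_update:
  assumes l: "length cs = Suc n" and i: "i < Suc n"
  shows "potential (cs[i := y]) = (-1) ^ i * B y (P (del_nth i cs))"
proof -
  obtain c0 r where cs: "cs = c0 # r" and r: "length r = n" using l by (cases cs) auto
  show ?thesis
  proof (cases i)
    case 0
    then show ?thesis using cs by simp
  next
    case (Suc j)
    have j: "j < n" using i Suc by simp
    have "potential (cs[i := y]) = (-1) ^ j * B c0 (P (y # del_nth j r))"
      using cs Suc bracket_update[OF r j] by (simp add: form_scale_right)
    also have "B c0 (P (y # del_nth j r)) = - B y (P (c0 # del_nth j r))"
      using bracket_invariant[of "del_nth j r" c0 y] r j by simp
    finally show ?thesis using cs Suc by simp
  qed
qed

lemma potential_update_twice: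
  assumes l: "length cs = Suc n" and i: "i < Suc n" and j: "j < Suc n" and ij: "i \<noteq> j"
  shows "potential (cs[i := x, j := x]) = 0"
proof -
  obtain c0 r where cs: "cs = c0 # r" and r: "length r = n" using l by (cases cs) auto
  have x_hd: "B x (P (r[k := x])) = 0" if "k < n" for k
    using bracket_update[OF r that, of x] form_bracket_self[of "del_nth k r" x] r that
    by (simp add: form_scale_right)
  show ?thesis
  proof (cases i)
    case 0
    then obtain j' where "j = Suc j'" using ij by (cases j) auto
    then show ?thesis using cs 0 x_hd[of j'] j by simp
  next
    case (Suc i')
    show ?thesis
    proof (cases j)
      case 0
      then show ?thesis using cs Suc x_hd[of i'] i by simp
    next
      case (Suc j')
      have i': "i' < n" and j': "j' < n" and ij': "i' \<noteq> j'"
        using i j ij \<open>i = Suc i'\<close> Suc by auto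
      let ?r = "r[i' := x]"
      have "P (?r[j' := x]) = scale ((-1) ^ j') (P (x # del_nth j' ?r))"
        using bracket_update r j' by simp
      also have "P (x # del_nth j' ?r) = 0"
      proof (rule bracket_repeat)
        show "length (del_nth j' ?r) = n - 1" using r j' by simp
        show "(if i' < j' then i' else i' - 1) < n - 1" using i' j' ij' by auto
        show "del_nth j' ?r ! (if i' < j' then i' else i' - 1) = x"
          using i' j' ij' r by (auto simp: del_nth_def nth_append min_def)
      qed
      finally show ?thesis using cs \<open>i = Suc i'\<close> Suc by simp
    qed
  qed
qed

lemma potential_expand:
  assumes e_central: "\<And>ws. length ws = n \<Longrightarrow> B e (P ws) = 0"
    and l: "length (L :: ('v \<times> 'k \<times> 'k) list) = Suc n"
  shows "potential (map (\<lambda>(u, s, t). u + scale s x + scale t e) L) =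
    potential (map fst L) +
    (\<Sum>i<Suc n. fst (snd (L ! i)) * ((-1) ^ i * B x (P (del_nth i (map fst L)))))"
proof -
  let ?us = "map (\<lambda>(u, s, t). (u + scale s x, t)) L"
  let ?us2 = "map (\<lambda>(u, s, t). (u, s)) L"
  have "map (\<lambda>(u, s, t). u + scale s x + scale t e) L = map (\<lambda>(c, t). c + scale t e) ?us"
    by (simp add: case_prod_beta)
  then have "potential (map (\<lambda>(u, s, t). u + scale s x + scale t e) L) =
      potential (map (\<lambda>(c, t). c + scale t e) ?us)"
    by (rule arg_cong)
  also have "\<dots> = potential (map fst ?us)"
  proof (rule multilinear_list_add_null)
    show "multilinear_list scale (length ?us) potential" using multilinear_potential l by simp
    show "\<forall>cs i. length cs = length ?us \<longrightarrow> i < length ?us \<longrightarrow> potential (cs[i := e]) = 0"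
      using potential_update e_central l by simp
  qed
  also have "map fst ?us = map (\<lambda>(u, s). u + scale s x) ?us2"
    by (simp add: case_prod_beta)
  also have "potential \<dots> = potential (map fst ?us2) +
      (\<Sum>i<length ?us2. snd (?us2 ! i) * potential ((map fst ?us2)[i := x]))"
  proof (rule multilinear_list_add_alternating)
    show "multilinear_list scale (length ?us2) potential" using multilinear_potential l by simp
    show "\<forall>cs i j. length cs = length ?us2 \<longrightarrow> i < length ?us2 \<longrightarrow> j < length ?us2 \<longrightarrow> i \<noteq> j \<longrightarrow>
        potential (cs[i := x, j := x]) = 0"
      using potential_update_twice l by simp
  qed
  also have "map fst ?us2 = map fst L" by (simp add: case_prod_beta)
  also have "(\<Sum>i<length ?us2. snd (?us2 ! i) * potential ((map fst L)[i := x])) =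
      (\<Sum>i<Suc n. fst (snd (L ! i)) * ((-1) ^ i * B x (P (del_nth i (map fst L)))))"
    using l by (intro sum.cong) (auto simp: case_prod_beta potential_update)
  finally show ?thesis .
qed

context
  fixes e x :: 'v
  assumes xe: "B x e = 1" and xx: "B x x = 0" and ee: "B e e = 0"
    and e_central: "\<And>ws. length ws = n \<Longrightarrow> B e (P ws) = 0"
begin

definition hyperbolic_perp :: "'v set" where
  "hyperbolic_perp = {v. B v x = 0 \<and> B v e = 0}"

definition hyperbolic_proj :: "'v \<Rightarrow> 'v" where
  "hyperbolic_proj v = v - scale (B v e) x - scale (B v x) e"

definition to_dext :: "'v \<Rightarrow> 'v \<times> 'k \<times> 'k" where
  "to_dext v = (hyperbolic_proj v, B v e, B v x)"

definition of_dext :: "'v \<times> 'k \<times> 'k \<Rightarrow> 'v" where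
  "of_dext = (\<lambda>(u, s, t). u + scale s x + scale t e)"

lemma form_e_x: "B e x = 1"
  using xe form_commute by metis

lemma hyperbolic_proj_mem: "hyperbolic_proj v \<in> hyperbolic_perp"
  unfolding hyperbolic_perp_def hyperbolic_proj_def
  by (simp add: form_diff_left form_scale_left xx xe form_e_x ee)

lemma hyperbolic_proj_id: "u \<in> hyperbolic_perp \<Longrightarrow> hyperbolic_proj u = u"
  unfolding hyperbolic_perp_def hyperbolic_proj_def by simp

lemma hyperbolic_proj_add: "hyperbolic_proj (v + w) = hyperbolic_proj v + hyperbolic_proj w"
  unfolding hyperbolic_proj_def by (simp add: form_add_left scale_left_distrib algebra_simps)

lemma hyperbolic_proj_scale: "hyperbolic_proj (scale c v) = scale c (hyperbolic_proj v)"
  unfolding hyperbolic_proj_def by (simp add: form_scale_left scale_right_diff_distrib)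

lemma hyperbolic_proj_minus: "hyperbolic_proj (- v) = - hyperbolic_proj v"
  using hyperbolic_proj_scale[of "-1" v] by simp

lemma form_hyperbolic_proj: "u \<in> hyperbolic_perp \<Longrightarrow> B u (hyperbolic_proj v) = B u v"
  unfolding hyperbolic_perp_def hyperbolic_proj_def by (simp add: form_diff_right form_scale_right)

lemma of_to_dext: "of_dext (to_dext v) = v"
  unfolding of_dext_def to_dext_def hyperbolic_proj_def by simp

lemma to_of_dext:
  assumes "a \<in> hyperbolic_perp \<times> UNIV"
  shows "to_dext (of_dext a) = a"
proof -
  obtain u s t where a: "a = (u, s, t)" and u: "B u x = 0" "B u e = 0"
    using assms unfolding hyperbolic_perp_def by auto
  have s: "B (of_dext a) e = s" and t: "B (of_dext a) x = t"
    unfolding a of_dext_def using u by (simp_all add: form_add_left form_scale_left xe ee xx form_e_x)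
  then have "hyperbolic_proj (of_dext a) = u"
    unfolding hyperbolic_proj_def by (simp add: a of_dext_def)
  with s t show ?thesis unfolding to_dext_def a by simp
qed

lemma dform_to_dext: "dform B (to_dext v) (to_dext w) = B v w"
proof -
  have "B x (hyperbolic_proj w) = 0" "B e (hyperbolic_proj w) = 0"
    using hyperbolic_proj_mem[of w] form_commute unfolding hyperbolic_perp_def by auto
  then have "B (hyperbolic_proj v) (hyperbolic_proj w) = B v (hyperbolic_proj w)"
    unfolding hyperbolic_proj_def[of v] by (simp add: form_diff_left form_scale_left)
  also have "\<dots> = B v w - B w e * B v x - B w x * B v e"
    unfolding hyperbolic_proj_def by (simp add: form_diff_right form_scale_right)
  finally show ?thesis unfolding dform_def to_dext_def by (simp add: algebra_simps)
qed

lemma fin_dim_hyperbolic_perp: "fin_dim scale hyperbolic_perp"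
proof -
  obtain S where S: "finite S" "span S = UNIV"
    using fin_dim_UNIV unfolding fin_dim_def by blast
  have "module_hom scale scale hyperbolic_proj"
    unfolding module_hom_iff
    by (intro conjI allI hyperbolic_proj_add hyperbolic_proj_scale) unfold_locales
  then have "span (hyperbolic_proj ` S) = hyperbolic_proj ` span S"
    by (rule module_hom.span_image)
  also have "\<dots> = hyperbolic_perp"
  proof
    show "hyperbolic_proj ` span S \<subseteq> hyperbolic_perp" using hyperbolic_proj_mem by auto
    show "hyperbolic_perp \<subseteq> hyperbolic_proj ` span S"
    proof
      fix u assume "u \<in> hyperbolic_perp"
      then have "u = hyperbolic_proj u" by (simp add: hyperbolic_proj_id)
      with S(2) show "u \<in> hyperbolic_proj ` span S" by blast
    qed
  qed
  finally have "span (hyperbolic_proj ` S) = hyperbolic_perp" .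
  moreover have "hyperbolic_proj ` S \<subseteq> hyperbolic_perp" using hyperbolic_proj_mem by blast
  ultimately show ?thesis
    unfolding fin_dim_def using S(1) by blast
qed

lemma ssia_hyperbolic_perp: "ssia scale hyperbolic_perp B (\<lambda>ws. hyperbolic_proj (P ws)) n"
  unfolding ssia_def
proof (intro conjI)
  show "subspace hyperbolic_perp"
    by (rule subspaceI) (auto simp: hyperbolic_perp_def form_add_left form_scale_left)
  show "nondeg_on B hyperbolic_perp"
    unfolding nondeg_on_def
    using form_nondegenerate form_hyperbolic_proj hyperbolic_proj_mem by metis
  show "\<forall>a0 a1 as. a0 \<in> hyperbolic_perp \<and> a1 \<in> hyperbolic_perp \<and> set as \<subseteq> hyperbolic_perp \<and>
      length as = n - 1 \<longrightarrow>
      B a0 (hyperbolic_proj (P (a1 # as))) = - B a1 (hyperbolic_proj (P (a0 # as)))"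
    using form_hyperbolic_proj bracket_invariant by (metis subsetI)
  show "\<forall>as i. set as \<subseteq> hyperbolic_perp \<and> length as = n \<and> Suc i < n \<longrightarrow>
      hyperbolic_proj (P (as[i := as ! Suc i, Suc i := as ! i])) = - hyperbolic_proj (P as)"
    using bracket_swap_nth hyperbolic_proj_minus by simp
  show "\<forall>u\<in>hyperbolic_perp. \<forall>v\<in>hyperbolic_perp. B u v = B v u"
    using form_commute by blast
qed (use fin_dim_hyperbolic_perp hyperbolic_proj_mem in
     \<open>simp_all add: form_add_left form_scale_left bracket_add bracket_scale
       hyperbolic_proj_add hyperbolic_proj_scale\<close>)

lemma skew_form_contraction: "skew_form scale hyperbolic_perp n (\<lambda>ws. B x (P ws))"
  unfolding skew_form_def
  by (simp add: bracket_add bracket_scale bracket_swap_nth form_add_right form_scale_right form_minus_right)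

lemma dform_to_dext_prod:
  assumes a0: "a0 \<in> hyperbolic_perp \<times> UNIV" and l: "length as = n"
  shows "dform B a0 (to_dext (P (map of_dext as))) =
    dext_omega B (\<lambda>ws. hyperbolic_proj (P ws)) (\<lambda>ws. B x (P ws)) n (a0 # as)"
proof -
  let ?L = "a0 # as"
  have "dform B a0 (to_dext (P (map of_dext as))) = B (of_dext a0) (P (map of_dext as))"
    using dform_to_dext to_of_dext[OF a0] by metis
  also have "\<dots> = potential (map of_dext ?L)" by simp
  also have "\<dots> = potential (map fst ?L) +
      (\<Sum>i<Suc n. fst (snd (?L ! i)) * ((-1) ^ i * B x (P (del_nth i (map fst ?L)))))"
  proof -
    have len: "length ?L = Suc n" using l by simp
    show ?thesis unfolding of_dext_def by (rule potential_expand[OF _ len]) (rule e_central)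
  qed
  also have "potential (map fst ?L) = B (fst a0) (hyperbolic_proj (P (map fst as)))"
    using form_hyperbolic_proj a0 by auto
  finally show ?thesis
    unfolding dext_omega_def by (simp add: map_del_nth algebra_simps)
qed

lemma iso_to_double_ext_of_hyperbolic_pair: "iso_to_double_ext_psi1 scale B P n"
  unfolding iso_to_double_ext_psi1_def
proof (intro exI conjI)
  show "bij_betw to_dext UNIV (hyperbolic_perp \<times> UNIV)"
    by (rule bij_betw_byWitness[where f' = of_dext])
      (auto simp: of_to_dext to_of_dext, auto simp: to_dext_def hyperbolic_proj_mem)
  show "\<forall>as. set as \<subseteq> hyperbolic_perp \<times> UNIV \<and> length as = n \<longrightarrow>
      (\<lambda>as. to_dext (P (map of_dext as))) as \<in> hyperbolic_perp \<times> UNIV"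
    by (simp add: to_dext_def hyperbolic_proj_mem)
  show "\<forall>v w. to_dext (v + w) = to_dext v + to_dext w"
    by (simp add: to_dext_def hyperbolic_proj_add form_add_left)
  show "\<forall>c v. to_dext (scale c v) = dscale scale c (to_dext v)"
    by (simp add: to_dext_def dscale_def hyperbolic_proj_scale form_scale_left)
  show "\<forall>as. length as = n \<longrightarrow> to_dext (P as) = (\<lambda>as. to_dext (P (map of_dext as))) (map to_dext as)"
    by (simp add: comp_def of_to_dext)
  show "\<forall>a0 as. a0 \<in> hyperbolic_perp \<times> UNIV \<and> set as \<subseteq> hyperbolic_perp \<times> UNIV \<and> length as = n \<longrightarrow>
      dform B a0 ((\<lambda>as. to_dext (P (map of_dext as))) as) =
      dext_omega B (\<lambda>ws. hyperbolic_proj (P ws)) (\<lambda>ws. B x (P ws)) n (a0 # as)"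
    using dform_to_dext_prod by blast
qed (simp_all add: ssia_hyperbolic_perp skew_form_contraction dform_to_dext)

end

lemma obtain_finite_basis:
  obtains S where "finite S" "independent S" "span S = UNIV"
proof -
  obtain T where T: "finite T" "span T = UNIV"
    using fin_dim_UNIV unfolding fin_dim_def by blast
  obtain S where S: "S \<subseteq> T" "independent S" "T \<subseteq> span S"
    using maximal_independent_subset[of T] by blast
  have "span S = UNIV" using span_mono[OF S(3)] T(2) span_span[of S] by auto
  with S T(1) finite_subset that show ?thesis by blast
qed

lemma form_zero_on_span: "(\<And>b. b \<in> S \<Longrightarrow> B v b = 0) \<Longrightarrow> y \<in> span S \<Longrightarrow> B v y = 0"
proof -
  assume "\<And>b. b \<in> S \<Longrightarrow> B v b = 0" and y: "y \<in> span S"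
  moreover have "subspace {y. B v y = 0}"
    by (rule subspaceI) (auto simp: form_add_right form_scale_right)
  ultimately have "span S \<subseteq> {y. B v y = 0}" by (intro span_minimal) auto
  with y show ?thesis by auto
qed

lemma exists_orthogonal_nonzero:
  assumes sub: "subspace I" and proper: "I \<noteq> UNIV"
  obtains e where "e \<noteq> 0" "\<And>y. y \<in> I \<Longrightarrow> B y e = 0"
proof -
  obtain Bs where Bs: "finite Bs" "independent Bs" "span Bs = UNIV"
    by (rule obtain_finite_basis)
  interpret fd: finite_dimensional_vector_space scale Bs
    by unfold_locales (use Bs in auto)
  obtain S where S: "S \<subseteq> I" "independent S" "I \<subseteq> span S"
    using basis_exists by metis
  have fS: "finite S" using fd.finiteI_independent[OF S(2)] .
  define Q where "Q v = (\<Sum>b\<in>S. scale (B v b) b)" for v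
  have lin: "Vector_Spaces.linear scale scale Q"
    unfolding Vector_Spaces.linear_iff
  proof (intro conjI allI)
    show "Q (v + w) = Q v + Q w" for v w
      unfolding Q_def by (simp add: form_add_left scale_left_distrib sum.distrib)
    show "Q (scale c v) = scale c (Q v)" for c v
      unfolding Q_def by (simp add: form_scale_left scale_sum_right)
  qed (rule vector_space_axioms)+
  have QI: "Q v \<in> I" for v
  proof -
    have "Q v \<in> span S" unfolding Q_def by (intro span_sum span_scale span_base)
    then show ?thesis using span_mono[OF S(1)] span_eq_iff[THEN iffD2, OF sub] by auto
  qed
  \<comment> \<open>\<open>Q\<close> maps into the proper subspace \<open>I\<close>, so its kernel, the orthogonal of \<open>S\<close>, is non-zero.\<close>
  have "\<not> inj Q"
  proof
    assume "inj Q"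
    then have "surj Q" using fd.linear_inj_imp_surj[OF lin] by simp
    then have "I = UNIV" using QI by (metis UNIV_eq_I surjD)
    then show False using proper by simp
  qed
  then obtain v1 v2 where v: "v1 \<noteq> v2" "Q v1 = Q v2" unfolding inj_def by blast
  define e where "e = v1 - v2"
  have Qe: "Q e = 0"
    using v(2) unfolding e_def Q_def
    by (simp add: form_diff_left scale_left_diff_distrib sum_subtractf)
  have "B e b = 0" if b: "b \<in> S" for b
  proof (rule ccontr)
    assume "B e b \<noteq> 0"
    then have "dependent S" using Qe b unfolding Q_def dependent_finite[OF fS] by blast
    then show False using S(2) by simp
  qed
  then have "B e y = 0" if "y \<in> I" for y
    using form_zero_on_span[of S e y] S(3) that by auto
  moreover have "e \<noteq> 0" using v(1) unfolding e_def by simp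
  ultimately show ?thesis using that form_commute by metis
qed

lemma span_insert_codim1:
  assumes sub: "subspace I" and codim1: "dim (UNIV :: 'v set) = dim I + 1" and w: "w \<notin> I"
  shows "span (insert w I) = UNIV"
proof -
  obtain Bs where Bs: "finite Bs" "independent Bs" "span Bs = UNIV"
    by (rule obtain_finite_basis)
  interpret fd: finite_dimensional_vector_space scale Bs
    by unfold_locales (use Bs in auto)
  have "dim (insert w I) = dim I + 1"
    using fd.dim_insert[of w I] w span_eq_iff[THEN iffD2, OF sub] by simp
  also have "\<dots> = fd.dimension" using codim1 fd.dim_UNIV unfolding fd.dimension_def by simp
  finally show ?thesis by (simp only: fd.dim_eq_full)
qed

lemma ideal_bracket_hd:
  assumes I: "ideal scale UNIV P n I" and l: "length r = n - 1" and y: "y \<in> I"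
  shows "P (y # r) \<in> I"
proof -
  have "P (r @ [y]) = scale ((-1) ^ length r) (P (y # r))"
    using bracket_move_to_front[of r y "[]"] l arity by simp
  then have "P (y # r) = scale ((-1) ^ length r) (P (r @ [y]))"
    by (simp add: power_mult_distrib[symmetric])
  moreover have "P (r @ [y]) \<in> I" using I l y unfolding ideal_def by blast
  ultimately show ?thesis using I unfolding ideal_def by (simp add: subspace_scale)
qed

lemma ideal_orthogonal:
  assumes I: "ideal scale UNIV P n I"
  shows "ideal scale UNIV P n {v. \<forall>y\<in>I. B y v = 0}"
  unfolding ideal_def
proof (intro conjI allI impI)
  show "subspace {v. \<forall>y\<in>I. B y v = 0}"
    by (rule subspaceI) (auto simp: form_add_right form_scale_right)
  fix as :: "'v list" and v :: 'v
  assume h: "set as \<subseteq> UNIV \<and> length as = n - 1 \<and> v \<in> {v. \<forall>y\<in>I. B y v = 0}"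
  then have l: "length as = n - 1" by simp
  have "B b (P (as @ [v])) = 0" if b: "b \<in> I" for b
  proof -
    have "B b (P (as @ [v])) = (-1) ^ length as * B b (P (v # as))"
      using bracket_move_to_front[of as v "[]"] l arity by (simp add: form_scale_right)
    also have "B b (P (v # as)) = - B v (P (b # as))" using bracket_invariant[OF l] .
    also have "B v (P (b # as)) = 0"
      using h ideal_bracket_hd[OF I l b] form_commute by auto
    finally show ?thesis by simp
  qed
  then show "P (as @ [v]) \<in> {v. \<forall>y\<in>I. B y v = 0}" by simp
qed simp

lemma orthogonal_split_codim1:
  assumes sub: "subspace I" and codim1: "dim (UNIV :: 'v set) = dim I + 1"
    and e: "e \<notin> I" and eI: "\<And>y. y \<in> I \<Longrightarrow> B y e = 0"
  defines "J \<equiv> {v. \<forall>y\<in>I. B y v = 0}"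
  shows "I \<inter> J = {0}" and "{a + b | a b. a \<in> I \<and> b \<in> J} = UNIV"
    and "nondeg_on B I" and "nondeg_on B J"
proof -
  have eJ: "e \<in> J" unfolding J_def using eI by simp
  have split: "\<exists>k. v - scale k e \<in> I" for v
    using span_insert_codim1[OF sub codim1 e] span_eq_iff[THEN iffD2, OF sub]
    unfolding span_insert by auto
  have zero: "y = 0" if "\<forall>i\<in>I. B y i = 0" "B y e = 0" for y
  proof (rule form_nondegenerate)
    fix v
    obtain k where "v - scale k e \<in> I" using split by blast
    moreover have "B y v = B y (v - scale k e) + k * B y e"
      by (simp add: form_diff_right form_scale_right)
    ultimately show "B y v = 0" using that by simp
  qed
  show "I \<inter> J = {0}"
  proof
    show "I \<inter> J \<subseteq> {0}"
      using zero eI form_commute unfolding J_def by fastforce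
    show "{0} \<subseteq> I \<inter> J" using sub subspace_0 unfolding J_def by auto
  qed
  show "{a + b | a b. a \<in> I \<and> b \<in> J} = UNIV"
  proof (intro set_eqI iffI)
    fix v :: 'v
    obtain k where "v - scale k e \<in> I" using split by blast
    moreover have "scale k e \<in> J" using eI unfolding J_def by (simp add: form_scale_right)
    moreover have "v = (v - scale k e) + scale k e" by simp
    ultimately show "v \<in> {a + b | a b. a \<in> I \<and> b \<in> J}" by blast
  qed simp
  show "nondeg_on B I"
    unfolding nondeg_on_def using zero eI by blast
  show "nondeg_on B J"
    unfolding nondeg_on_def
  proof (intro ballI impI)
    fix y assume "y \<in> J" "\<forall>z\<in>J. B y z = 0"
    then show "y = 0" using zero eJ form_commute unfolding J_def by auto
  qed
qed

lemma orthogonal_mem_ideal_if_irreducible: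
  assumes irr: "irreducible scale UNIV B P n" and I: "ideal scale UNIV P n I" and "I \<noteq> {0}"
    and codim1: "dim (UNIV :: 'v set) = dim I + 1"
    and e0: "e \<noteq> 0" and eI: "\<And>y. y \<in> I \<Longrightarrow> B y e = 0"
  shows "e \<in> I"
proof (rule ccontr)
  assume "e \<notin> I"
  define J where "J = {v. \<forall>y\<in>I. B y v = 0}"
  have "ideal scale UNIV P n J" unfolding J_def by (rule ideal_orthogonal[OF I])
  moreover have "J \<noteq> {0}" using eI e0 unfolding J_def by blast
  moreover note orthogonal_split_codim1[OF _ codim1 \<open>e \<notin> I\<close> eI, folded J_def]
  ultimately have "\<exists>I J. ideal scale UNIV P n I \<and> ideal scale UNIV P n J \<and> I \<noteq> {0} \<and> J \<noteq> {0} \<and>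
      I \<inter> J = {0} \<and> {x + y | x y. x \<in> I \<and> y \<in> J} = UNIV \<and> nondeg_on B I \<and> nondeg_on B J"
    using I \<open>I \<noteq> {0}\<close> unfolding ideal_def by (intro exI[of _ I] exI[of _ J] conjI) simp_all
  with irr show False unfolding irreducible_def by blast
qed

lemma mem_ideal_if_orthogonal:
  assumes sub: "subspace I" and codim1: "dim (UNIV :: 'v set) = dim I + 1"
    and e0: "e \<noteq> 0" and eI: "\<And>y. y \<in> I \<Longrightarrow> B y e = 0" and we: "B w e = 0"
  shows "w \<in> I"
proof (rule ccontr)
  assume "w \<notin> I"
  have "B e b = 0" if "b \<in> insert w I" for b
    using that we eI form_commute by auto
  then have "B e v = 0" for v
    using form_zero_on_span span_insert_codim1[OF sub codim1 \<open>w \<notin> I\<close>] by blast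
  then show False using e0 form_nondegenerate by blast
qed

lemma obtain_hyperbolic_partner:
  assumes e0: "e \<noteq> 0" and ee: "B e e = 0"
  obtains x where "B x e = 1" "B x x = 0"
proof -
  obtain z where z: "B e z \<noteq> 0" using form_nondegenerate e0 by blast
  define x1 where "x1 = scale (1 / B e z) z"
  have "B e x1 = 1" using z by (simp add: x1_def form_scale_right)
  then have x1e: "B x1 e = 1" "B e x1 = 1" using form_commute by metis+
  \<comment> \<open>Correcting \<open>x\<^sub>1\<close> by a multiple of the isotropic \<open>e\<close> kills \<open>(x\<^sub>1, x\<^sub>1)\<close>.\<close>
  define x where "x = x1 - scale (B x1 x1 / 2) e"
  have "B x e = 1" "B x x = 0"
    by (simp_all add: x_def form_diff_left form_diff_right form_scale_left form_scale_right x1e ee)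
  then show ?thesis by (rule that)
qed

lemma orthogonal_annihilates_brackets:
  assumes I: "ideal scale UNIV P n I" and eI: "\<And>y. y \<in> I \<Longrightarrow> B y e = 0" and xe: "B x e = 1"
    and perp_in_I: "\<And>w. B w e = 0 \<Longrightarrow> w \<in> I" and l: "length ws = n"
  shows "B e (P ws) = 0"
proof -
  have hd_x: "B e (P (w # q)) = B w e * B e (P (x # q))" if q: "length q = n - 1" for w q
  proof -
    define i where "i = w - scale (B w e) x"
    have "i \<in> I" using perp_in_I unfolding i_def by (simp add: form_diff_left form_scale_left xe)
    then have "B e (P (i # q)) = 0" using eI[OF ideal_bracket_hd[OF I q]] form_commute by metis
    moreover have "P (w # q) = P (i # q) + scale (B w e) (P (x # q))"
    proof -
      have "P (w # q) = P ((w # q)[0 := i + scale (B w e) x])" by (simp add: i_def)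
      then show ?thesis
        using bracket_add[of "w # q" 0 i] bracket_scale[of "w # q" 0 _ x] q arity by simp
    qed
    ultimately show ?thesis by (simp add: form_add_right form_scale_right)
  qed
  obtain w1 w2 r where ws: "ws = w1 # w2 # r" and r: "length r = n - 2"
    using l arity by (cases ws; cases "tl ws") auto
  have "B e (P ws) = B w1 e * B e (P (x # w2 # r))" using hd_x[of "w2 # r" w1] r arity ws by simp
  also have "P (x # w2 # r) = - P (w2 # x # r)" using bracket_swap[of "[]" w2 x r] r arity by simp
  also have "B e (- P (w2 # x # r)) = - (B w2 e * B e (P (x # x # r)))"
    using hd_x[of "x # r" w2] r arity by (simp add: form_minus_right)
  also have "P (x # x # r) = 0" using bracket_repeat_hd[OF r] .
  finally show ?thesis by simp
qed

lemma iso_to_double_ext_if_codim1_ideal: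
  assumes irr: "irreducible scale UNIV B P n" and I: "ideal scale UNIV P n I"
    and nontrivial: "I \<noteq> {0}" and proper: "I \<noteq> UNIV"
    and codim1: "dim (UNIV :: 'v set) = dim I + 1"
  shows "iso_to_double_ext_psi1 scale B P n"
proof -
  have sub: "subspace I" using I unfolding ideal_def by simp
  obtain e where e0: "e \<noteq> 0" and eI: "\<And>y. y \<in> I \<Longrightarrow> B y e = 0"
    using exists_orthogonal_nonzero[OF sub proper] by blast
  have ee: "B e e = 0"
    using eI orthogonal_mem_ideal_if_irreducible[OF irr I nontrivial codim1 e0 eI] .
  obtain x where xe: "B x e = 1" and xx: "B x x = 0"
    using obtain_hyperbolic_partner[OF e0 ee] .
  have "B e (P ws) = 0" if "length ws = n" for ws
    using orthogonal_annihilates_brackets[OF I eI xe _ that]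
      mem_ideal_if_orthogonal[OF sub codim1 e0 eI] by blast
  then show ?thesis using iso_to_double_ext_of_hyperbolic_pair[OF xe xx ee] by blast
qed

end

lemma iso_to_double_ext_psi1_if_codim1_ideal:
  fixes scale :: "'k::field_char_0 \<Rightarrow> 'v::ab_group_add \<Rightarrow> 'v"
  assumes "vector_space scale" "ssia scale UNIV B P n" "2 \<le> n"
    "irreducible scale UNIV B P n" "maximal_nontrivial_ideal scale UNIV P n I"
    "vector_space.dim scale (UNIV :: 'v set) = vector_space.dim scale I + 1"
  shows "iso_to_double_ext_psi1 scale B P n"
proof -
  interpret ssia_algebra scale B P n
    using assms unfolding ssia_algebra_def ssia_algebra_axioms_def by blast
  show ?thesis
    using assms(4-6) iso_to_double_ext_if_codim1_ideal
    unfolding maximal_nontrivial_ideal_def by blast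
qed

theorem corollary2:
  fixes n :: nat
  assumes "2 \<le> n"
  shows
   "(\<forall>(scale :: real \<Rightarrow> 'v::ab_group_add \<Rightarrow> 'v) B P I.
        vector_space scale \<and> ssia scale UNIV B P n \<and>
        irreducible scale UNIV B P n \<and> \<not> simple scale UNIV P n \<and>
        maximal_nontrivial_ideal scale UNIV P n I \<and>
        vector_space.dim scale (UNIV :: 'v set) = vector_space.dim scale I + 1
      \<longrightarrow> iso_to_double_ext_psi1 scale B P n) \<and>
    (\<forall>(scale :: complex \<Rightarrow> 'w::ab_group_add \<Rightarrow> 'w) B P I.
        vector_space scale \<and> ssia scale UNIV B P n \<and>
        irreducible scale UNIV B P n \<and> \<not> simple scale UNIV P n \<and>
        maximal_nontrivial_ideal scale UNIV P n I \<and>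
        vector_space.dim scale (UNIV :: 'w set) = vector_space.dim scale I + 1
      \<longrightarrow> iso_to_double_ext_psi1 scale B P n)"
  by (intro conjI allI impI; elim conjE; rule iso_to_double_ext_psi1_if_codim1_ideal;
      (assumption | rule assms))

end
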